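(* Let $K\subset\mathbb{R}^2$ be a convex body of area $1$ and let $R$ be a rectangle inscribed in $K$ with area $r\le 1/2$. Then at least one of the four caps of $R$ in $K$ has area at least $\frac14\big(\sqrt{1-2r}+1-r\big)$.
   Context: A convex body is a compact convex set with nonempty interior. A parallelogram (in particular a rectangle) $P$ is inscribed in $K$ if its four vertices lie on $\partial K$. In that case $\mathrm{int}(K)\setminus P$ has four connected components (one beyond each side of $P$), and their closures are called the caps of $P$ in $K$. *)

theory Defs
  imports "HOL-Analysis.Analysis"
begin

definition convex_body :: "(real^2) set \<Rightarrow> bool" where
  "convex_body K \<longleftrightarrow> compact K \<and> convex K \<and> interior K \<noteq> {}"

definition is_rectangle :: "real^2 \<Rightarrow> real^2 \<Rightarrow> real^2 \<Rightarrow> real^2 \<Rightarrow> bool" where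
  "is_rectangle a b c d \<longleftrightarrow> a \<noteq> b \<and> a \<noteq> d \<and> (b - a) \<bullet> (d - a) = 0 \<and> c = b + d - a"

definition rectangle_inscribed ::
  "(real^2) set \<Rightarrow> real^2 \<Rightarrow> real^2 \<Rightarrow> real^2 \<Rightarrow> real^2 \<Rightarrow> bool" where
  "rectangle_inscribed K a b c d \<longleftrightarrow> is_rectangle a b c d \<and>
     a \<in> frontier K \<and> b \<in> frontier K \<and> c \<in> frontier K \<and> d \<in> frontier K"

definition caps :: "(real^2) set \<Rightarrow> (real^2) set \<Rightarrow> (real^2) set set" where
  "caps K P = closure ` components (interior K - P)"

end

theory Submission
  imports Defs "HOL-Analysis.Simplex_Content"
begin

(* Write the parallelogram P as a + s e + t f with 0 <= s, t <= 1. The part of K beyond a side of P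
  lies in the triangle cut off from that side by the supporting lines of K at its two endpoints.
  Measuring these triangles by the slopes of the four supporting lines, the areas m1, m2, m3, m4 of
  the four regions beyond the sides (in cyclic order) satisfy (m1 + m3) (m2 + m4) <= (area P)^2 / 4,
  because the defect is a perfect square. Since also m1 + m2 + m3 + m4 >= area K - area P = 1 - r,
  one pair of opposite regions has total area at least ((1 - r) + sqrt (1 - 2 r)) / 2, so one of
  them, and the cap containing it, has at least half of that. *)

definition cross2 :: "real^2 \<Rightarrow> real^2 \<Rightarrow> real" where
  "cross2 u v = u$1 * v$2 - u$2 * v$1"

lemma cross2_coordinates: "cross2 u (s *\<^sub>R u + t *\<^sub>R v) = t * cross2 u v"
  by (simp add: cross2_def algebra_simps)

lemma cross2_rotate:
  "cross2 v (- u) = cross2 u v" "cross2 (- u) (- v) = cross2 u v" "cross2 (- v) u = cross2 u v"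
  by (simp_all add: cross2_def algebra_simps)

lemma cross2_eq_inner: "cross2 u x = (\<chi> i. if i = 1 then - u$2 else u$1) \<bullet> x"
  by (simp add: cross2_def inner_vec_def sum_2 algebra_simps)

lemma exists_coordinates:
  assumes "cross2 u v \<noteq> 0"
  obtains s t where "x = p + s *\<^sub>R u + t *\<^sub>R v"
proof
  have "cross2 u v *\<^sub>R (x - p) = cross2 (x - p) v *\<^sub>R u + cross2 u (x - p) *\<^sub>R v"
    by (simp add: vec_eq_iff forall_2 cross2_def algebra_simps)
  moreover have "x - p = (1 / cross2 u v) *\<^sub>R (cross2 u v *\<^sub>R (x - p))"
    using assms by simp
  ultimately have "x - p = (1 / cross2 u v) *\<^sub>R (cross2 (x - p) v *\<^sub>R u + cross2 u (x - p) *\<^sub>R v)"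
    by simp
  then show "x = p + (cross2 (x - p) v / cross2 u v) *\<^sub>R u + (cross2 u (x - p) / cross2 u v) *\<^sub>R v"
    by (simp add: scaleR_add_right algebra_simps)
qed

lemma inner_basis_eq_zero:
  assumes "cross2 u v \<noteq> 0" "n \<bullet> u = 0" "n \<bullet> v = 0"
  shows "n = 0"
proof -
  obtain s t where "n = 0 + s *\<^sub>R u + t *\<^sub>R v" using exists_coordinates[OF assms(1)] .
  then have "n \<bullet> n = 0" using assms(2,3) by (simp add: inner_add_right)
  then show ?thesis by simp
qed

lemma cross2_orthogonal_nonzero:
  assumes "u \<noteq> 0" "v \<noteq> 0" "u \<bullet> v = 0"
  shows "cross2 u v \<noteq> 0"
proof
  assume "cross2 u v = 0"
  moreover have "(cross2 u v)\<^sup>2 + (u \<bullet> v)\<^sup>2 = (u \<bullet> u) * (v \<bullet> v)"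
    by (simp add: cross2_def inner_vec_def sum_2 power2_eq_square algebra_simps)
  ultimately show False using assms by simp
qed

definition parallelogram :: "real^2 \<Rightarrow> real^2 \<Rightarrow> real^2 \<Rightarrow> (real^2) set" where
  "parallelogram p u v = convex hull {p, p + u, p + u + v, p + v}"

lemma parallelogram_coordinates:
  "parallelogram p u v = {p + s *\<^sub>R u + t *\<^sub>R v | s t. s \<in> {0..1} \<and> t \<in> {0..1}}"
    (is "_ = ?Q")
proof
  have in_Q: "p + s *\<^sub>R u + t *\<^sub>R v \<in> ?Q" if "s \<in> {0..1}" "t \<in> {0..1}" for s t
    using that by blast
  have "convex ?Q"
  proof (rule convexI)
    fix x y and \<mu> \<nu> :: real
    assume "x \<in> ?Q" "y \<in> ?Q" and \<mu>\<nu>: "0 \<le> \<mu>" "0 \<le> \<nu>" "\<mu> + \<nu> = 1"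
    then obtain s t s' t' where st: "x = p + s *\<^sub>R u + t *\<^sub>R v" "y = p + s' *\<^sub>R u + t' *\<^sub>R v"
      "s \<in> {0..1}" "t \<in> {0..1}" "s' \<in> {0..1}" "t' \<in> {0..1}" by blast
    have "\<mu> *\<^sub>R x + \<nu> *\<^sub>R y = p + (\<mu> * s + \<nu> * s') *\<^sub>R u + (\<mu> * t + \<nu> * t') *\<^sub>R v"
      using \<mu>\<nu>(3) st(1,2) by (simp add: algebra_simps flip: scaleR_add_left)
    moreover have "\<mu> * s + \<nu> * s' \<in> {0..1}" "\<mu> * t + \<nu> * t' \<in> {0..1}"
      using st(3-6) \<mu>\<nu> by (auto intro: convex_bound_le)
    ultimately show "\<mu> *\<^sub>R x + \<nu> *\<^sub>R y \<in> ?Q" by blast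
  qed
  moreover have "p \<in> ?Q" "p + u \<in> ?Q" "p + u + v \<in> ?Q" "p + v \<in> ?Q"
    using in_Q[of 0 0] in_Q[of 1 0] in_Q[of 1 1] in_Q[of 0 1] by (simp_all add: add.assoc)
  ultimately show "parallelogram p u v \<subseteq> ?Q"
    unfolding parallelogram_def by (intro hull_minimal) auto
next
  have vertices: "p \<in> parallelogram p u v" "p + u \<in> parallelogram p u v"
    "p + u + v \<in> parallelogram p u v" "p + v \<in> parallelogram p u v"
    unfolding parallelogram_def by (auto intro: hull_inc)
  have convex: "convex (parallelogram p u v)"
    unfolding parallelogram_def by (rule convex_convex_hull)
  show "?Q \<subseteq> parallelogram p u v"
  proof clarify
    fix s t :: real assume "s \<in> {0..1}" "t \<in> {0..1}"
    then have "(1 - t) *\<^sub>R ((1 - s) *\<^sub>R p + s *\<^sub>R (p + u)) + t *\<^sub>R ((1 - s) *\<^sub>R (p + v) + s *\<^sub>R (p + u + v))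
        \<in> parallelogram p u v"
      using vertices by (intro convexD[OF convex]) auto
    then show "p + s *\<^sub>R u + t *\<^sub>R v \<in> parallelogram p u v"
      by (simp add: algebra_simps)
  qed
qed

lemma measure_parallelogram: "measure lebesgue (parallelogram p u v) = \<bar>cross2 u v\<bar>"
proof -
  define L where "L = (\<lambda>x::real^2. x$1 *\<^sub>R u + x$2 *\<^sub>R v)"
  have "linear L" by (auto simp: L_def linear_iff algebra_simps)
  have "parallelogram p u v = (+) p ` L ` cbox 0 1"
  proof -
    have "(\<exists>x\<in>cbox 0 1. y = p + L x) \<longleftrightarrow> (\<exists>s t. y = p + s *\<^sub>R u + t *\<^sub>R v \<and> s \<in> {0..1} \<and> t \<in> {0..1})"
      for y
    proof
      assume "\<exists>x\<in>cbox 0 1. y = p + L x"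
      then obtain x where "x \<in> cbox 0 1" "y = p + L x" by blast
      then show "\<exists>s t. y = p + s *\<^sub>R u + t *\<^sub>R v \<and> s \<in> {0..1} \<and> t \<in> {0..1}"
        by (intro exI[of _ "x$1"] exI[of _ "x$2"]) (auto simp: L_def mem_box_cart add.assoc)
    next
      assume "\<exists>s t. y = p + s *\<^sub>R u + t *\<^sub>R v \<and> s \<in> {0..1} \<and> t \<in> {0..1}"
      then obtain s t where "y = p + s *\<^sub>R u + t *\<^sub>R v" "s \<in> {0..1}" "t \<in> {0..1}" by blast
      then show "\<exists>x\<in>cbox 0 1. y = p + L x"
        by (intro bexI[of _ "\<chi> i. if i = 1 then s else t"])
          (auto simp: L_def mem_box_cart add.assoc forall_2)
    qed
    then have "parallelogram p u v = {y. \<exists>x\<in>cbox 0 1. y = p + L x}"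
      unfolding parallelogram_coordinates by blast
    then show ?thesis by auto
  qed
  also have "measure lebesgue \<dots> = \<bar>det (matrix L)\<bar> * measure lebesgue (cbox (0::real^2) 1)"
    by (simp add: measure_translation measure_lebesgue_linear_transformation \<open>linear L\<close>)
  also have "\<dots> = \<bar>cross2 u v\<bar>"
  proof -
    have "cbox (0::real^2) 1 \<noteq> {}" using mem_box_cart(2)[of 0 0 1] by auto
    then show ?thesis
      by (simp add: L_def det_2 matrix_def axis_def cross2_def content_cbox_cart measure_completion
          mult.commute)
  qed
  finally show ?thesis .
qed

(* The points of int K strictly beyond the line through p and p + u, on the side away from p + v. *)
definition beyond_side :: "(real^2) set \<Rightarrow> real^2 \<Rightarrow> real^2 \<Rightarrow> real^2 \<Rightarrow> (real^2) set" where
  "beyond_side K p u v = interior K \<inter> {x. cross2 u (x - p) * cross2 u v < 0}"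

lemma beyond_side_coordinates:
  assumes "cross2 u v \<noteq> 0"
  shows "p + s *\<^sub>R u + t *\<^sub>R v \<in> beyond_side K p u v \<longleftrightarrow> p + s *\<^sub>R u + t *\<^sub>R v \<in> interior K \<and> t < 0"
proof -
  have "cross2 u (p + s *\<^sub>R u + t *\<^sub>R v - p) * cross2 u v = t * (cross2 u v)\<^sup>2"
    by (simp add: add.assoc cross2_coordinates power2_eq_square)
  moreover have "0 < (cross2 u v)\<^sup>2" using assms by simp
  ultimately have "cross2 u (p + s *\<^sub>R u + t *\<^sub>R v - p) * cross2 u v < 0 \<longleftrightarrow> t < 0"
    by (simp add: mult_less_0_iff)
  then show ?thesis unfolding beyond_side_def by blast
qed

lemma beyond_side_eq_halfspace:
  "beyond_side K p u v = interior K \<inter> {x. (cross2 u v *\<^sub>R w) \<bullet> x < (cross2 u v *\<^sub>R w) \<bullet> p}"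
  if "w = (\<chi> i. if i = 1 then - u$2 else u$1)"
  using that by (auto simp: beyond_side_def cross2_eq_inner inner_diff_right algebra_simps)

lemma open_beyond_side: "open (beyond_side K p u v)"
  unfolding beyond_side_eq_halfspace[OF refl] by (intro open_Int open_interior open_halfspace_lt)

lemma convex_beyond_side: "convex K \<Longrightarrow> convex (beyond_side K p u v)"
  unfolding beyond_side_eq_halfspace[OF refl] by (intro convex_Int convex_interior convex_halfspace_lt)

lemma beyond_side_subset: "beyond_side K p u v \<subseteq> K"
  using interior_subset by (auto simp: beyond_side_def)

lemma lmeasurable_beyond_side: "bounded K \<Longrightarrow> beyond_side K p u v \<in> lmeasurable"
  by (intro lmeasurable_open open_beyond_side bounded_subset[OF _ beyond_side_subset])

lemma parallelogram_side_coordinates: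
  assumes "cross2 u v \<noteq> 0" and x: "x = p + s *\<^sub>R u + t *\<^sub>R v"
  shows "x \<in> beyond_side K p u v \<longleftrightarrow> x \<in> interior K \<and> t < 0"
    and "x \<in> beyond_side K (p + u) v (- u) \<longleftrightarrow> x \<in> interior K \<and> 1 < s"
    and "x \<in> beyond_side K (p + u + v) (- u) (- v) \<longleftrightarrow> x \<in> interior K \<and> 1 < t"
    and "x \<in> beyond_side K (p + v) (- v) u \<longleftrightarrow> x \<in> interior K \<and> s < 0"
proof -
  have k: "cross2 v (- u) \<noteq> 0" "cross2 (- u) (- v) \<noteq> 0" "cross2 (- v) u \<noteq> 0"
    using assms(1) by (simp_all add: cross2_rotate)
  have x2: "x = (p + u) + t *\<^sub>R v + (1 - s) *\<^sub>R (- u)"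
    and x3: "x = (p + u + v) + (1 - s) *\<^sub>R (- u) + (1 - t) *\<^sub>R (- v)"
    and x4: "x = (p + v) + (1 - t) *\<^sub>R (- v) + s *\<^sub>R u"
    using x by (simp_all add: algebra_simps)
  show "x \<in> beyond_side K p u v \<longleftrightarrow> x \<in> interior K \<and> t < 0"
    using beyond_side_coordinates[OF assms(1), of p s t K] unfolding x[symmetric] .
  show "x \<in> beyond_side K (p + u) v (- u) \<longleftrightarrow> x \<in> interior K \<and> 1 < s"
    using beyond_side_coordinates[OF k(1), of "p + u" t "1 - s" K] unfolding x2[symmetric] by simp
  show "x \<in> beyond_side K (p + u + v) (- u) (- v) \<longleftrightarrow> x \<in> interior K \<and> 1 < t"
    using beyond_side_coordinates[OF k(2), of "p + u + v" "1 - s" "1 - t" K]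
    unfolding x3[symmetric] by simp
  show "x \<in> beyond_side K (p + v) (- v) u \<longleftrightarrow> x \<in> interior K \<and> s < 0"
    using beyond_side_coordinates[OF k(3), of "p + v" "1 - t" s K] unfolding x4[symmetric] .
qed

lemma interior_diff_parallelogram:
  assumes "cross2 u v \<noteq> 0"
  shows "interior K - parallelogram p u v =
    beyond_side K p u v \<union> beyond_side K (p + u) v (- u) \<union>
    beyond_side K (p + u + v) (- u) (- v) \<union> beyond_side K (p + v) (- v) u"
proof (intro equalityI subsetI)
  fix x assume x: "x \<in> interior K - parallelogram p u v"
  obtain s t where st: "x = p + s *\<^sub>R u + t *\<^sub>R v" using exists_coordinates[OF assms] .
  note sides = parallelogram_side_coordinates[OF assms st, of K]
  have "\<not> (s \<in> {0..1} \<and> t \<in> {0..1})"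
  proof
    assume "s \<in> {0..1} \<and> t \<in> {0..1}"
    then have "x \<in> parallelogram p u v" unfolding parallelogram_coordinates st by blast
    with x show False by blast
  qed
  then have "t < 0 \<or> 1 < s \<or> 1 < t \<or> s < 0" by auto
  then show "x \<in> beyond_side K p u v \<union> beyond_side K (p + u) v (- u) \<union>
      beyond_side K (p + u + v) (- u) (- v) \<union> beyond_side K (p + v) (- v) u"
    using x unfolding Un_iff sides by blast
next
  fix x assume x: "x \<in> beyond_side K p u v \<union> beyond_side K (p + u) v (- u) \<union>
      beyond_side K (p + u + v) (- u) (- v) \<union> beyond_side K (p + v) (- v) u"
  then have "x \<in> interior K" by (auto simp: beyond_side_def)
  moreover have "x \<notin> parallelogram p u v"
  proof
    assume "x \<in> parallelogram p u v"
    then obtain s t where st: "x = p + s *\<^sub>R u + t *\<^sub>R v" "s \<in> {0..1}" "t \<in> {0..1}"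
      by (auto simp: parallelogram_coordinates)
    show False
      using x st(2,3) unfolding Un_iff parallelogram_side_coordinates[OF assms st(1)] by auto
  qed
  ultimately show "x \<in> interior K - parallelogram p u v" by blast
qed

lemma measure_diff_parallelogram_le:
  assumes "bounded K" "convex K" "cross2 u v \<noteq> 0"
  shows "measure lebesgue K - measure lebesgue (parallelogram p u v) \<le>
    measure lebesgue (beyond_side K p u v) + measure lebesgue (beyond_side K (p + u) v (- u)) +
    measure lebesgue (beyond_side K (p + u + v) (- u) (- v)) + measure lebesgue (beyond_side K (p + v) (- v) u)"
proof -
  have sides: "beyond_side K q w z \<in> sets lebesgue" for q w z
    using lmeasurable_beyond_side[OF assms(1)] by (rule fmeasurableD)
  have "measure lebesgue K = measure lebesgue (interior K)"
    using measure_interior[OF assms(1) negligible_convex_frontier[OF assms(2)]] by (rule sym)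
  also have "\<dots> - measure lebesgue (parallelogram p u v) \<le> measure lebesgue (interior K - parallelogram p u v)"
    using assms(1) unfolding parallelogram_def
    by (intro measure_diff_le_measure_setdiff lmeasurable_interior lmeasurable_compact
        finite_imp_compact_convex_hull) auto
  also have "\<dots> \<le> measure lebesgue (beyond_side K p u v) + measure lebesgue (beyond_side K (p + u) v (- u)) +
      measure lebesgue (beyond_side K (p + u + v) (- u) (- v)) + measure lebesgue (beyond_side K (p + v) (- v) u)"
    unfolding interior_diff_parallelogram[OF assms(3)]
    by (intro order.trans[OF measure_Un_le] add_mono order_refl sides sets.Un)+
  finally show ?thesis by simp
qed

lemma measure_triangle:
  "measure lebesgue (convex hull {p, p + u, p + s *\<^sub>R u + t *\<^sub>R v}) = \<bar>t\<bar> * \<bar>cross2 u v\<bar> / 2"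
proof -
  have "compact (convex hull {p, p + u, p + s *\<^sub>R u + t *\<^sub>R v})"
    by (rule finite_imp_compact_convex_hull) simp
  then have "measure lebesgue (convex hull {p, p + u, p + s *\<^sub>R u + t *\<^sub>R v})
      = measure lborel (convex hull {p, p + u, p + s *\<^sub>R u + t *\<^sub>R v})"
    by (intro measure_completion) (auto dest: compact_imp_closed)
  also have "\<dots> = \<bar>t\<bar> * \<bar>cross2 u v\<bar> / 2"
    by (subst content_triangle) (simp add: cross2_def algebra_simps abs_mult[symmetric])
  finally show ?thesis .
qed

lemma measure_le_triangle_area:
  assumes "S \<in> sets lebesgue" "0 < \<alpha>" "0 < \<gamma>" "0 < \<alpha> * \<delta> + \<beta> * \<gamma>"
    and cut: "\<And>x. x \<in> S \<Longrightarrow> \<exists>s t. x = p + s *\<^sub>R u + t *\<^sub>R v \<and> t < 0 \<and>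
                 0 \<le> \<alpha> * s + \<beta> * t \<and> 0 \<le> \<gamma> * (1 - s) + \<delta> * t"
  shows "(\<alpha> * \<delta> + \<beta> * \<gamma>) * measure lebesgue S \<le> \<bar>cross2 u v\<bar> / 2 * \<alpha> * \<gamma>"
proof -
  define D where "D = \<alpha> * \<delta> + \<beta> * \<gamma>"
  define q where "q = p + (\<beta> * \<gamma> / D) *\<^sub>R u + (- (\<alpha> * \<gamma>) / D) *\<^sub>R v"
  have "0 < D" using assms(4) by (simp add: D_def)
  have "S \<subseteq> convex hull {p, p + u, q}"
  proof
    fix x assume "x \<in> S"
    then obtain s t where x: "x = p + s *\<^sub>R u + t *\<^sub>R v" "t < 0"
      and c: "0 \<le> \<alpha> * s + \<beta> * t" "0 \<le> \<gamma> * (1 - s) + \<delta> * t"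
      using cut by blast
    \<comment> \<open>barycentric coordinates of x with respect to p, p + u, q\<close>
    define l1 where "l1 = 1 - s + t * \<delta> / \<gamma>"
    define l2 where "l2 = s + t * \<beta> / \<alpha>"
    define l3 where "l3 = - t * D / (\<alpha> * \<gamma>)"
    have "0 \<le> l1" "0 \<le> l2"
      using c assms(2,3) by (simp_all add: l1_def l2_def field_simps)
    moreover have "0 \<le> l3"
      using x(2) \<open>0 < D\<close> assms(2,3) unfolding l3_def
      by (intro divide_nonneg_pos) (auto simp: mult_nonpos_nonneg)
    moreover have "l1 + l2 + l3 = 1"
      using assms(2,3) by (simp add: l1_def l2_def l3_def D_def field_simps)
    moreover have "x = l1 *\<^sub>R p + l2 *\<^sub>R (p + u) + l3 *\<^sub>R q"
    proof -
      have "l2 + l3 * (\<beta> * \<gamma> / D) = s" "l3 * (- (\<alpha> * \<gamma>) / D) = t"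
        using assms(2,3) \<open>0 < D\<close> by (simp_all add: l2_def l3_def field_simps)
      with \<open>l1 + l2 + l3 = 1\<close> show ?thesis
        unfolding x(1) q_def by (simp add: algebra_simps flip: scaleR_add_left)
    qed
    ultimately show "x \<in> convex hull {p, p + u, q}"
      unfolding convex_hull_3 by blast
  qed
  then have "measure lebesgue S \<le> measure lebesgue (convex hull {p, p + u, q})"
    by (intro measure_mono_fmeasurable assms(1) lmeasurable_compact finite_imp_compact_convex_hull) auto
  also have "\<dots> = \<alpha> * \<gamma> / D * \<bar>cross2 u v\<bar> / 2"
    using assms(2,3) \<open>0 < D\<close> unfolding q_def measure_triangle by simp
  finally show ?thesis
    using \<open>0 < D\<close> by (simp add: D_def field_simps)
qed

(* In coordinates x = p + s u + t v, the supporting lines alpha s + beta t = 0 at p and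
  gamma (1 - s) + delta t = 0 at p + u cut off beyond the side [p, p + u] a triangle of area
  kappa alpha gamma / (alpha delta + beta gamma), with kappa = |cross2 u v| / 2; m is at most that.
  If one of the lines contains the side (alpha gamma = 0), then nothing lies beyond it. *)
definition triangle_bound :: "real \<Rightarrow> real \<Rightarrow> real \<Rightarrow> real \<Rightarrow> real \<Rightarrow> real \<Rightarrow> bool" where
  "triangle_bound \<kappa> \<alpha> \<beta> \<gamma> \<delta> m \<longleftrightarrow>
     0 \<le> \<alpha> \<and> 0 \<le> \<beta> \<and> 0 \<le> \<gamma> \<and> 0 \<le> \<delta> \<and> 0 \<le> m \<and>
     (\<alpha> * \<delta> + \<beta> * \<gamma>) * m \<le> \<kappa> * \<alpha> * \<gamma> \<and> (\<alpha> * \<gamma> = 0 \<longrightarrow> m = 0)"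

lemma triangle_bound_wedges:
  assumes "triangle_bound \<kappa> \<alpha> \<beta> \<gamma> \<delta> m" "0 \<le> \<kappa>"
  shows "\<delta> * m \<le> \<kappa> * \<gamma>" and "\<beta> * m \<le> \<kappa> * \<alpha>"
proof -
  have nn: "0 \<le> \<alpha>" "0 \<le> \<beta>" "0 \<le> \<gamma>" "0 \<le> \<delta>" "0 \<le> m"
    and D: "(\<alpha> * \<delta> + \<beta> * \<gamma>) * m \<le> \<kappa> * \<alpha> * \<gamma>"
    and degenerate: "\<alpha> * \<gamma> = 0 \<Longrightarrow> m = 0"
    using assms(1) by (auto simp: triangle_bound_def)
  have "\<delta> * m \<le> \<kappa> * \<gamma> \<and> \<beta> * m \<le> \<kappa> * \<alpha>"
  proof (cases "\<alpha> * \<gamma> = 0")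
    case True
    then show ?thesis using degenerate nn assms(2) by simp
  next
    case False
    then have "0 < \<alpha>" "0 < \<gamma>" using nn by auto
    have "\<alpha> * (\<delta> * m) \<le> (\<alpha> * \<delta> + \<beta> * \<gamma>) * m"
      using nn by (simp add: algebra_simps)
    also have "\<dots> \<le> \<alpha> * (\<kappa> * \<gamma>)" using D by (simp add: algebra_simps)
    finally have "\<alpha> * (\<delta> * m) \<le> \<alpha> * (\<kappa> * \<gamma>)" .
    moreover have "\<gamma> * (\<beta> * m) \<le> (\<alpha> * \<delta> + \<beta> * \<gamma>) * m"
      using nn by (simp add: algebra_simps)
    then have "\<gamma> * (\<beta> * m) \<le> \<gamma> * (\<kappa> * \<alpha>)" using D by (simp add: algebra_simps)
    ultimately show ?thesis using \<open>0 < \<alpha>\<close> \<open>0 < \<gamma>\<close> by simp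
  qed
  then show "\<delta> * m \<le> \<kappa> * \<gamma>" "\<beta> * m \<le> \<kappa> * \<alpha>" by auto
qed

lemma triangle_bounds_product_le:
  assumes T2: "triangle_bound \<kappa> b2 a2 b3 a3 m2"
    and T3: "triangle_bound \<kappa> a3 b3 a4 b4 m3"
    and T4: "triangle_bound \<kappa> b4 a4 b1 a1 m4"
    and "0 \<le> \<kappa>"
  shows "m3 * (m2 + m4) \<le> \<kappa>\<^sup>2"
proof (cases "a3 * a4 = 0")
  case True
  then show ?thesis using T3 \<open>0 \<le> \<kappa>\<close> by (simp add: triangle_bound_def)
next
  case False
  with T3 have pos: "0 < a3" "0 < a4" and nn: "0 \<le> m3"
    and D3: "(a3 * b4 + b3 * a4) * m3 \<le> \<kappa> * a3 * a4"
    by (auto simp: triangle_bound_def less_le)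
  have "a3 * m2 \<le> \<kappa> * b3" by (rule triangle_bound_wedges(1)[OF T2 \<open>0 \<le> \<kappa>\<close>])
  moreover have "a4 * m4 \<le> \<kappa> * b4" by (rule triangle_bound_wedges(2)[OF T4 \<open>0 \<le> \<kappa>\<close>])
  ultimately have "a4 * (a3 * m2) + a3 * (a4 * m4) \<le> a4 * (\<kappa> * b3) + a3 * (\<kappa> * b4)"
    using pos by (intro add_mono mult_left_mono) auto
  then have "(a3 * a4) * (m3 * (m2 + m4)) \<le> \<kappa> * ((a3 * b4 + b3 * a4) * m3)"
    using mult_left_mono[OF _ nn] by (fastforce simp: algebra_simps)
  also have "\<dots> \<le> (a3 * a4) * \<kappa>\<^sup>2"
    using mult_left_mono[OF D3 \<open>0 \<le> \<kappa>\<close>] by (simp add: power2_eq_square algebra_simps)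
  finally show ?thesis using pos by simp
qed

lemma opposite_triangle_bounds_product_le:
  assumes T1: "triangle_bound \<kappa> a1 b1 a2 b2 m1"
    and T2: "triangle_bound \<kappa> b2 a2 b3 a3 m2"
    and T3: "triangle_bound \<kappa> a3 b3 a4 b4 m3"
    and T4: "triangle_bound \<kappa> b4 a4 b1 a1 m4"
    and "0 \<le> \<kappa>"
  shows "(m1 + m3) * (m2 + m4) \<le> \<kappa>\<^sup>2"
proof (cases "m1 = 0 \<or> m2 = 0 \<or> m3 = 0 \<or> m4 = 0")
  case True
  \<comment> \<open>The hypotheses are invariant under the cyclic relabelling a_i, b_i, m_i to b_(i+1), a_(i+1), m_(i+1).\<close>
  have "m3 * (m2 + m4) \<le> \<kappa>\<^sup>2" "m4 * (m3 + m1) \<le> \<kappa>\<^sup>2"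
    "m1 * (m4 + m2) \<le> \<kappa>\<^sup>2" "m2 * (m1 + m3) \<le> \<kappa>\<^sup>2"
    using triangle_bounds_product_le[OF T2 T3 T4 \<open>0 \<le> \<kappa>\<close>]
      triangle_bounds_product_le[OF T3 T4 T1 \<open>0 \<le> \<kappa>\<close>]
      triangle_bounds_product_le[OF T4 T1 T2 \<open>0 \<le> \<kappa>\<close>]
      triangle_bounds_product_le[OF T1 T2 T3 \<open>0 \<le> \<kappa>\<close>] .
  with True show ?thesis by (auto simp: algebra_simps)
next
  case False
  with T1 T2 T3 T4 have pos: "0 < a1" "0 < a2" "0 < a3" "0 < a4" "0 < b1" "0 < b2" "0 < b3" "0 < b4"
    and nn: "0 \<le> m1" "0 \<le> m2" "0 \<le> m3" "0 \<le> m4"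
    by (auto simp: triangle_bound_def less_le)
  define D1 where "D1 = a1 * b2 + b1 * a2"
  define D2 where "D2 = b2 * a3 + a2 * b3"
  define D3 where "D3 = a3 * b4 + b3 * a4"
  define D4 where "D4 = b4 * a1 + a4 * b1"
  have D: "0 < D1" "0 < D2" "0 < D3" "0 < D4"
    using pos by (simp_all add: D1_def D2_def D3_def D4_def add_pos_pos)
  have "m1 \<le> \<kappa> * a1 * a2 / D1" "m2 \<le> \<kappa> * b2 * b3 / D2"
    "m3 \<le> \<kappa> * a3 * a4 / D3" "m4 \<le> \<kappa> * b4 * b1 / D4"
    using T1 T2 T3 T4 D
    by (auto simp: triangle_bound_def D1_def D2_def D3_def D4_def pos_le_divide_eq mult.commute)
  then have "(m1 + m3) * (m2 + m4)
      \<le> (\<kappa> * a1 * a2 / D1 + \<kappa> * a3 * a4 / D3) * (\<kappa> * b2 * b3 / D2 + \<kappa> * b4 * b1 / D4)"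
    using nn by (intro mult_mono add_mono) auto
  also have "\<dots> = \<kappa>\<^sup>2 * ((a1 * a2 * D3 + a3 * a4 * D1) * (b2 * b3 * D4 + b4 * b1 * D2))
      / (D1 * D2 * D3 * D4)"
    using D by (simp add: field_simps power2_eq_square)
  also have "\<dots> \<le> \<kappa>\<^sup>2"
  proof -
    have "D1 * D2 * D3 * D4 - (a1 * a2 * D3 + a3 * a4 * D1) * (b2 * b3 * D4 + b4 * b1 * D2)
        = (a1 * b2 * a3 * b4 - b1 * a2 * b3 * a4)\<^sup>2"
      by (simp add: D1_def D2_def D3_def D4_def power2_eq_square algebra_simps)
    then have "(a1 * a2 * D3 + a3 * a4 * D1) * (b2 * b3 * D4 + b4 * b1 * D2) \<le> D1 * D2 * D3 * D4"
      by (metis diff_ge_0_iff_ge zero_le_power2)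
    then show ?thesis
      using D by (simp add: divide_le_eq mult_left_mono)
  qed
  finally show ?thesis .
qed

lemma frontier_supporting_normal:
  fixes K :: "'a::euclidean_space set"
  assumes "convex K" "interior K \<noteq> {}" "w \<in> frontier K"
  obtains n where "n \<noteq> 0" "\<And>y. y \<in> K \<Longrightarrow> n \<bullet> w \<le> n \<bullet> y"
proof -
  have "w \<in> closure K" "w \<notin> rel_interior K"
    using assms(3) rel_interior_nonempty_interior[OF assms(2)] by (auto simp: frontier_def)
  then obtain n where "n \<noteq> 0" "\<And>y. y \<in> closure K \<Longrightarrow> n \<bullet> w \<le> n \<bullet> y"
    using supporting_hyperplane_relative_frontier[OF assms(1)] by metis
  then show ?thesis using that closure_subset by blast
qed

lemma beyond_side_cut_by_supporting_lines:
  assumes "cross2 u v \<noteq> 0" "x \<in> beyond_side K p u v"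
    and "\<And>y. y \<in> K \<Longrightarrow> n \<bullet> p \<le> n \<bullet> y" "\<And>y. y \<in> K \<Longrightarrow> m \<bullet> (p + u) \<le> m \<bullet> y"
  shows "\<exists>s t. x = p + s *\<^sub>R u + t *\<^sub>R v \<and> t < 0 \<and>
           0 \<le> (n \<bullet> u) * s + (n \<bullet> v) * t \<and> 0 \<le> - (m \<bullet> u) * (1 - s) + (m \<bullet> v) * t"
proof -
  obtain s t where x: "x = p + s *\<^sub>R u + t *\<^sub>R v" using exists_coordinates[OF assms(1)] .
  then have "t < 0" "x \<in> K"
    using assms(2) beyond_side_coordinates[OF assms(1)] interior_subset by blast+
  then have "n \<bullet> p \<le> n \<bullet> x" "m \<bullet> (p + u) \<le> m \<bullet> x" using assms(3,4) by auto
  then show ?thesis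
    using x \<open>t < 0\<close> by (intro exI[of _ s] exI[of _ t]) (simp add: inner_add_right algebra_simps)
qed

lemma beyond_side_triangle_bound:
  assumes "cross2 u v \<noteq> 0" "bounded K"
    and "p \<in> K" "p + u \<in> K" "p + v \<in> K" "p + u + v \<in> K"
    and "n \<noteq> 0" "\<And>y. y \<in> K \<Longrightarrow> n \<bullet> p \<le> n \<bullet> y"
    and "m \<noteq> 0" "\<And>y. y \<in> K \<Longrightarrow> m \<bullet> (p + u) \<le> m \<bullet> y"
  shows "triangle_bound (\<bar>cross2 u v\<bar> / 2) (n \<bullet> u) (n \<bullet> v) (- (m \<bullet> u)) (m \<bullet> v)
           (measure lebesgue (beyond_side K p u v))"
proof -
  define S where "S = beyond_side K p u v"
  have nonneg: "0 \<le> n \<bullet> u" "0 \<le> n \<bullet> v" "0 \<le> - (m \<bullet> u)" "0 \<le> m \<bullet> v"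
    using assms(8)[of "p + u"] assms(8)[of "p + v"] assms(10)[of p] assms(10)[of "p + u + v"] assms(3-6)
    by (simp_all add: inner_add_right)
  have cut: "\<exists>s t. x = p + s *\<^sub>R u + t *\<^sub>R v \<and> t < 0 \<and>
      0 \<le> (n \<bullet> u) * s + (n \<bullet> v) * t \<and> 0 \<le> - (m \<bullet> u) * (1 - s) + (m \<bullet> v) * t" if "x \<in> S" for x
    using beyond_side_cut_by_supporting_lines[OF assms(1) _ assms(8,10)] that by (simp add: S_def)
  have empty: "S = {}" if "(n \<bullet> u) * - (m \<bullet> u) = 0"
  proof (rule ccontr)
    assume "S \<noteq> {}"
    then obtain s t where "t < 0" "0 \<le> (n \<bullet> u) * s + (n \<bullet> v) * t" "0 \<le> - (m \<bullet> u) * (1 - s) + (m \<bullet> v) * t"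
      using cut by blast
    moreover have "n \<bullet> u \<noteq> 0 \<or> n \<bullet> v \<noteq> 0" "m \<bullet> u \<noteq> 0 \<or> m \<bullet> v \<noteq> 0"
      using inner_basis_eq_zero[OF assms(1)] assms(7,9) by blast+
    ultimately show False
      using that nonneg mult_pos_neg[of "n \<bullet> v" t] mult_pos_neg[of "m \<bullet> v" t]
      by (auto simp: less_le)
  qed
  have "(n \<bullet> u * (m \<bullet> v) + n \<bullet> v * - (m \<bullet> u)) * measure lebesgue S
      \<le> \<bar>cross2 u v\<bar> / 2 * (n \<bullet> u) * - (m \<bullet> u)"
  proof (cases "(n \<bullet> u) * - (m \<bullet> u) = 0 \<or> n \<bullet> u * (m \<bullet> v) + n \<bullet> v * - (m \<bullet> u) = 0")
    case True
    have "0 \<le> \<bar>cross2 u v\<bar> / 2 * (n \<bullet> u) * - (m \<bullet> u)"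
      using nonneg by (intro mult_nonneg_nonneg) auto
    with True show ?thesis using empty by auto
  next
    case False
    then have "0 < n \<bullet> u" "0 < - (m \<bullet> u)" using nonneg by (auto simp: less_le)
    moreover have "0 < n \<bullet> u * (m \<bullet> v) + n \<bullet> v * - (m \<bullet> u)"
      using False nonneg by (intro le_neq_trans add_nonneg_nonneg mult_nonneg_nonneg) auto
    moreover have "S \<in> sets lebesgue"
      using lmeasurable_beyond_side[OF assms(2)] by (simp add: S_def fmeasurableD)
    ultimately show ?thesis using cut by (intro measure_le_triangle_area) auto
  qed
  then show ?thesis
    using nonneg empty by (simp add: triangle_bound_def S_def[symmetric])
qed

lemma inscribed_parallelogram_opposite_sides_product:
  assumes "convex_body K" "cross2 e f \<noteq> 0"
    and "a \<in> frontier K" "a + e \<in> frontier K" "a + e + f \<in> frontier K" "a + f \<in> frontier K"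
  shows "(measure lebesgue (beyond_side K a e f) + measure lebesgue (beyond_side K (a + e + f) (- e) (- f))) *
    (measure lebesgue (beyond_side K (a + e) f (- e)) + measure lebesgue (beyond_side K (a + f) (- f) e))
    \<le> (measure lebesgue (parallelogram a e f))\<^sup>2 / 4"
proof -
  have K: "compact K" "convex K" "interior K \<noteq> {}" using assms(1) by (auto simp: convex_body_def)
  then have "bounded K" "frontier K \<subseteq> K"
    by (auto simp: compact_imp_bounded compact_imp_closed frontier_subset_closed)
  then have vertices: "a \<in> K" "a + e \<in> K" "a + e + f \<in> K" "a + f \<in> K" using assms(3-6) by auto
  obtain nA where nA: "nA \<noteq> 0" "\<And>y. y \<in> K \<Longrightarrow> nA \<bullet> a \<le> nA \<bullet> y"
    using frontier_supporting_normal[OF K(2,3) assms(3)] by blast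
  obtain nB where nB: "nB \<noteq> 0" "\<And>y. y \<in> K \<Longrightarrow> nB \<bullet> (a + e) \<le> nB \<bullet> y"
    using frontier_supporting_normal[OF K(2,3) assms(4)] by blast
  obtain nC where nC: "nC \<noteq> 0" "\<And>y. y \<in> K \<Longrightarrow> nC \<bullet> (a + e + f) \<le> nC \<bullet> y"
    using frontier_supporting_normal[OF K(2,3) assms(5)] by blast
  obtain nD where nD: "nD \<noteq> 0" "\<And>y. y \<in> K \<Longrightarrow> nD \<bullet> (a + f) \<le> nD \<bullet> y"
    using frontier_supporting_normal[OF K(2,3) assms(6)] by blast
  define \<kappa> where "\<kappa> = \<bar>cross2 e f\<bar> / 2"
  have k: "cross2 f (- e) \<noteq> 0" "cross2 (- e) (- f) \<noteq> 0" "cross2 (- f) e \<noteq> 0"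
    using assms(2) by (simp_all add: cross2_rotate)
  \<comment> \<open>Each side becomes the first side of the same parallelogram, relabelled from one of its vertices.\<close>
  have "triangle_bound \<kappa> (nA \<bullet> e) (nA \<bullet> f) (- (nB \<bullet> e)) (nB \<bullet> f) (measure lebesgue (beyond_side K a e f))"
    unfolding \<kappa>_def using beyond_side_triangle_bound[OF assms(2) \<open>bounded K\<close> vertices(1,2,4,3) nA nB] .
  moreover have "triangle_bound \<kappa> (nB \<bullet> f) (- (nB \<bullet> e)) (- (nC \<bullet> f)) (- (nC \<bullet> e))
      (measure lebesgue (beyond_side K (a + e) f (- e)))"
    using beyond_side_triangle_bound[OF k(1) \<open>bounded K\<close>, of "a + e" nB nC] vertices nB nC
    by (simp add: \<kappa>_def cross2_rotate algebra_simps)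
  moreover have "triangle_bound \<kappa> (- (nC \<bullet> e)) (- (nC \<bullet> f)) (nD \<bullet> e) (- (nD \<bullet> f))
      (measure lebesgue (beyond_side K (a + e + f) (- e) (- f)))"
    using beyond_side_triangle_bound[OF k(2) \<open>bounded K\<close>, of "a + e + f" nC nD] vertices nC nD
    by (simp add: \<kappa>_def cross2_rotate algebra_simps)
  moreover have "triangle_bound \<kappa> (- (nD \<bullet> f)) (nD \<bullet> e) (nA \<bullet> f) (nA \<bullet> e)
      (measure lebesgue (beyond_side K (a + f) (- f) e))"
    using beyond_side_triangle_bound[OF k(3) \<open>bounded K\<close>, of "a + f" nD nA] vertices nD nA
    by (simp add: \<kappa>_def cross2_rotate algebra_simps)
  ultimately have "(measure lebesgue (beyond_side K a e f) + measure lebesgue (beyond_side K (a + e + f) (- e) (- f))) *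
    (measure lebesgue (beyond_side K (a + e) f (- e)) + measure lebesgue (beyond_side K (a + f) (- f) e)) \<le> \<kappa>\<^sup>2"
    by (rule opposite_triangle_bounds_product_le) (simp add: \<kappa>_def)
  then show ?thesis by (simp add: \<kappa>_def measure_parallelogram power_divide)
qed

lemma max_ge_of_sum_and_product:
  fixes S T r :: real
  assumes "r \<le> 1/2" "1 - r \<le> S + T" "S * T \<le> r\<^sup>2 / 4"
  shows "(1 - r + sqrt (1 - 2 * r)) / 2 \<le> max S T"
proof -
  define M where "M = max S T"
  have M: "(1 - r) / 2 \<le> M" "S + T \<le> 2 * M" using assms(2) by (auto simp: M_def)
  have "M * (1 - r - M) \<le> S * T"
  proof (cases "T \<le> S")
    case True
    then have "M * (1 - r - M) \<le> M * T" using M assms(1,2) by (intro mult_left_mono) (auto simp: M_def)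
    then show ?thesis using True by (simp add: M_def)
  next
    case False
    then have "M * (1 - r - M) \<le> M * S" using M assms(1,2) by (intro mult_left_mono) (auto simp: M_def)
    then show ?thesis using False by (simp add: M_def mult.commute)
  qed
  then have "(1 - 2 * r) / 4 \<le> (M - (1 - r) / 2)\<^sup>2"
    using assms(3) by (simp add: power2_eq_square field_simps)
  then have "sqrt ((1 - 2 * r) / 4) \<le> sqrt ((M - (1 - r) / 2)\<^sup>2)"
    by (rule real_sqrt_le_mono)
  then have "sqrt (1 - 2 * r) / 2 \<le> M - (1 - r) / 2"
    using M(1) by (simp add: real_sqrt_divide)
  then show ?thesis by (simp add: M_def field_simps)
qed

lemma exists_cap_measure_ge:
  assumes "compact K" "R \<subseteq> interior K - P" "convex R" "R \<noteq> {}" "R \<in> sets lebesgue"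
  shows "\<exists>C \<in> caps K P. measure lebesgue R \<le> measure lebesgue C"
proof -
  obtain C where C: "C \<in> components (interior K - P)" "R \<subseteq> C"
    using exists_component_superset[OF assms(2) _ convex_connected[OF assms(3)]] assms(2,4) by blast
  then have "closure C \<subseteq> K"
    using in_components_subset[OF C(1)] interior_subset assms(1)
    by (metis Diff_subset closure_minimal compact_imp_closed order_trans)
  then have "compact (closure C)"
    using assms(1) by (meson bounded_subset compact_eq_bounded_closed closed_closure compact_imp_bounded)
  then have "measure lebesgue R \<le> measure lebesgue (closure C)"
    using C(2) closure_subset by (intro measure_mono_fmeasurable[OF _ assms(5) lmeasurable_compact]) auto
  then show ?thesis using C(1) unfolding caps_def by blast
qed

theorem inscribed_parallelogram_large_cap:
  assumes "convex_body K" "measure lebesgue K = 1" "cross2 e f \<noteq> 0"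
    and "a \<in> frontier K" "a + e \<in> frontier K" "a + e + f \<in> frontier K" "a + f \<in> frontier K"
    and "r = measure lebesgue (parallelogram a e f)" "r \<le> 1/2"
  shows "\<exists>C \<in> caps K (parallelogram a e f). (sqrt (1 - 2 * r) + 1 - r) / 4 \<le> measure lebesgue C"
proof -
  define R1 R2 R3 R4 where "R1 = beyond_side K a e f" and "R2 = beyond_side K (a + e) f (- e)"
    and "R3 = beyond_side K (a + e + f) (- e) (- f)" and "R4 = beyond_side K (a + f) (- f) e"
  note R_defs = R1_def R2_def R3_def R4_def
  have K: "compact K" "bounded K" "convex K" using assms(1) by (auto simp: convex_body_def compact_imp_bounded)
  have "1 - r \<le> measure lebesgue R1 + measure lebesgue R2 + measure lebesgue R3 + measure lebesgue R4"
    using measure_diff_parallelogram_le[OF K(2,3) assms(3), of a] assms(2,8) by (simp add: R_defs)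
  moreover have "(measure lebesgue R1 + measure lebesgue R3) * (measure lebesgue R2 + measure lebesgue R4)
      \<le> r\<^sup>2 / 4"
    using inscribed_parallelogram_opposite_sides_product[OF assms(1,3-7)] assms(8) by (simp add: R_defs)
  ultimately have "(1 - r + sqrt (1 - 2 * r)) / 2
      \<le> max (measure lebesgue R1 + measure lebesgue R3) (measure lebesgue R2 + measure lebesgue R4)"
    using assms(9) by (intro max_ge_of_sum_and_product) auto
  then have "\<exists>R \<in> {R1, R2, R3, R4}. (sqrt (1 - 2 * r) + 1 - r) / 4 \<le> measure lebesgue R"
    unfolding le_max_iff_disj by auto
  then obtain R where R: "R \<in> {R1, R2, R3, R4}" "(sqrt (1 - 2 * r) + 1 - r) / 4 \<le> measure lebesgue R"
    by blast
  have "0 \<le> sqrt (1 - 2 * r)" using assms(9) by simp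
  then have "0 < sqrt (1 - 2 * r) + 1 - r" using assms(9) by linarith
  then have "0 < (sqrt (1 - 2 * r) + 1 - r) / 4" by simp
  with R(2) have "R \<noteq> {}" by auto
  moreover have "R \<subseteq> interior K - parallelogram a e f"
    using R(1) unfolding interior_diff_parallelogram[OF assms(3)] R_defs by blast
  moreover have "convex R"
    using R(1) convex_beyond_side[OF K(3)] by (auto simp: R_defs)
  moreover have "R \<in> sets lebesgue"
    using R(1) lmeasurable_beyond_side[OF K(2)] by (auto simp: R_defs)
  ultimately obtain C where C: "C \<in> caps K (parallelogram a e f)" "measure lebesgue R \<le> measure lebesgue C"
    using exists_cap_measure_ge[OF K(1)] by metis
  show ?thesis using order.trans[OF R(2) C(2)] C(1) by blast
qed

theorem lemma3p5:
  fixes K :: "(real^2) set" and a b c d :: "real^2" and r :: real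
  assumes "convex_body K"
    and "measure lebesgue K = 1"
    and "rectangle_inscribed K a b c d"
    and "r = measure lebesgue (convex hull {a, b, c, d})"
    and "r \<le> 1/2"
  shows "\<exists>C \<in> caps K (convex hull {a, b, c, d}).
           measure lebesgue C \<ge> (sqrt (1 - 2 * r) + 1 - r) / 4"
proof -
  define e f where "e = b - a" and "f = d - a"
  have vertices: "b = a + e" "c = a + e + f" "d = a + f"
    and frontier: "a \<in> frontier K" "b \<in> frontier K" "c \<in> frontier K" "d \<in> frontier K"
    and "cross2 e f \<noteq> 0"
    using assms(3) cross2_orthogonal_nonzero[of e f]
    by (auto simp: rectangle_inscribed_def is_rectangle_def e_def f_def)
  have "convex hull {a, b, c, d} = parallelogram a e f"
    by (simp add: parallelogram_def vertices insert_commute)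
  then show ?thesis
    using inscribed_parallelogram_large_cap[OF assms(1,2) \<open>cross2 e f \<noteq> 0\<close>] frontier assms(4,5)
    unfolding vertices by simp
qed

end
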